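(* Let $F$, $G$, $\Pi$ be as in the context. Let $S$ and $S'$ be two attracting (resp. repelling) strips in $\Sigma_A\times I$ with respect to $G$ such that $\Pi(S)=\Pi(S')$. If $B$ and $B'$ are their maximal attractors (resp. maximal repellers), then $\Pi(B)=\Pi(B')$.
   Context: $I=[0,1]$, $R(x)=1-x$. $F(\xi,p)=(\sigma(\xi),f_{\xi_0}(p))$ on $\Sigma_N\times I$, $\Sigma_N=\{1,\ldots,N\}^{\mathbb Z}$, with $f_i$ $C^1$-diffeomorphisms onto their images. $\mathcal I_P$ / $\mathcal I_R$: indices of orientation preserving / reversing $f_i$. $A=(a_{ij})_{i,j=1}^{2N}$ with $a_{ij}=1$ if ($i\in\mathcal I_P$, $j\le N$), or ($i\in\mathcal I_R$, $j>N$), or ($i-N\in\mathcal I_P$, $j>N$), or ($i-N\in\mathcal I_R$, $j\le N$), else $0$; $\Sigma_A$ the $A$-admissible sequences in $\{1,\ldots,2N\}^{\mathbb Z}$ with shift $\sigma_A$; $\pi(\omega)_n=\overline{\omega_n}$ ($\overline i=i$ for $i\le N$, $\overline i=i-N$ otherwise). $G(\omega,x)=(\sigma_A(\omega),g_{\omega_0}(x))$ with $g_i=f_i$, $g_{i+N}=R\circ f_i\circ R$ ($i\in\mathcal I_P$), $g_i=R\circ f_i$, $g_{i+N}=f_i\circ R$ ($i\in\mathcal I_R$). $C=\{\omega\colon\omega_0\le N\}$; $\Pi(\omega,x)=(\pi(\omega),x)$ if $\omega\in C$, $(\pi(\omega),R(x))$ otherwise. Strips $S_{\varphi,\psi}=\{(\omega,x)\colon\varphi(\omega)\le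 x\le\psi(\omega)\}$ for $\varphi<\psi$ pointwise. A strip $S$ is attracting for $G$ if $G(S)\subset\operatorname{int}S$, repelling if $G^{-1}$ is defined on $S$ and $G^{-1}(S)\subset\operatorname{int}S$. Maximal attractor of attracting $S$: $\bigcap_{n\ge0}G^n(S)$; maximal repeller of repelling $S$: $\bigcap_{n\ge0}G^{-n}(S)$. *)

theory Defs
  imports "HOL-Analysis.Analysis"
begin

text \<open>Sequences in {1..N}^Z, {1..2N}^Z are functions int => nat
(carrying the product topology of the discrete nat).\<close>

definition R :: "real \<Rightarrow> real" where "R x = 1 - x"

definition C1_diffeo_onto_image :: "(real \<Rightarrow> real) \<Rightarrow> bool" where
  "C1_diffeo_onto_image h \<longleftrightarrow> h ` {0..1} \<subseteq> {0..1} \<and>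
     (\<exists>h'. continuous_on {0..1} h' \<and>
        (\<forall>x\<in>{0..1}. (h has_real_derivative h' x) (at x within {0..1}) \<and> h' x \<noteq> 0))"

definition IP :: "nat \<Rightarrow> (nat \<Rightarrow> real \<Rightarrow> real) \<Rightarrow> nat set" where
  "IP N f = {i\<in>{1..N}. \<forall>x\<in>{0..1}. \<forall>y\<in>{0..1}. x < y \<longrightarrow> f i x < f i y}"

definition IR :: "nat \<Rightarrow> (nat \<Rightarrow> real \<Rightarrow> real) \<Rightarrow> nat set" where
  "IR N f = {i\<in>{1..N}. \<forall>x\<in>{0..1}. \<forall>y\<in>{0..1}. x < y \<longrightarrow> f i y < f i x}"

definition Aentry :: "nat \<Rightarrow> (nat \<Rightarrow> real \<Rightarrow> real) \<Rightarrow> nat \<Rightarrow> nat \<Rightarrow> bool" where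
  "Aentry N f i j \<longleftrightarrow>
     (i \<in> IP N f \<and> j \<le> N) \<or> (i \<in> IR N f \<and> j > N) \<or>
     (i > N \<and> i - N \<in> IP N f \<and> j > N) \<or> (i > N \<and> i - N \<in> IR N f \<and> j \<le> N)"

definition SigmaA :: "nat \<Rightarrow> (nat \<Rightarrow> real \<Rightarrow> real) \<Rightarrow> (int \<Rightarrow> nat) set" where
  "SigmaA N f = {\<omega>. \<forall>n. \<omega> n \<in> {1..2*N} \<and> Aentry N f (\<omega> n) (\<omega> (n+1))}"

definition shift :: "(int \<Rightarrow> nat) \<Rightarrow> (int \<Rightarrow> nat)" where
  "shift \<omega> = (\<lambda>n. \<omega> (n + 1))"

definition bar :: "nat \<Rightarrow> nat \<Rightarrow> nat" where
  "bar N i = (if i \<le> N then i else i - N)"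

definition piA :: "nat \<Rightarrow> (int \<Rightarrow> nat) \<Rightarrow> (int \<Rightarrow> nat)" where
  "piA N \<omega> = (\<lambda>n. bar N (\<omega> n))"

definition gmap :: "nat \<Rightarrow> (nat \<Rightarrow> real \<Rightarrow> real) \<Rightarrow> nat \<Rightarrow> real \<Rightarrow> real" where
  "gmap N f i =
     (if i \<le> N then (if i \<in> IP N f then f i else R \<circ> f i)
      else (if i - N \<in> IP N f then R \<circ> f (i - N) \<circ> R else f (i - N) \<circ> R))"

definition Gmap :: "nat \<Rightarrow> (nat \<Rightarrow> real \<Rightarrow> real) \<Rightarrow> (int \<Rightarrow> nat) \<times> real \<Rightarrow> (int \<Rightarrow> nat) \<times> real" where
  "Gmap N f p = (shift (fst p), gmap N f (fst p 0) (snd p))"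

definition PiMap :: "nat \<Rightarrow> (int \<Rightarrow> nat) \<times> real \<Rightarrow> (int \<Rightarrow> nat) \<times> real" where
  "PiMap N p = (piA N (fst p), if fst p 0 \<le> N then snd p else R (snd p))"

definition Xsp :: "nat \<Rightarrow> (nat \<Rightarrow> real \<Rightarrow> real) \<Rightarrow> ((int \<Rightarrow> nat) \<times> real) set" where
  "Xsp N f = SigmaA N f \<times> {0..1}"

definition strip_set :: "nat \<Rightarrow> (nat \<Rightarrow> real \<Rightarrow> real) \<Rightarrow> ((int \<Rightarrow> nat) \<Rightarrow> real) \<Rightarrow> ((int \<Rightarrow> nat) \<Rightarrow> real)
    \<Rightarrow> ((int \<Rightarrow> nat) \<times> real) set" where
  "strip_set N f \<phi> \<psi> = {(\<omega>, x). (\<omega>, x) \<in> Xsp N f \<and> \<phi> \<omega> \<le> x \<and> x \<le> \<psi> \<omega>}"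

definition is_strip :: "nat \<Rightarrow> (nat \<Rightarrow> real \<Rightarrow> real) \<Rightarrow> ((int \<Rightarrow> nat) \<times> real) set \<Rightarrow> bool" where
  "is_strip N f S \<longleftrightarrow> (\<exists>\<phi> \<psi>. (\<forall>\<omega>\<in>SigmaA N f. \<phi> \<omega> < \<psi> \<omega>) \<and> S = strip_set N f \<phi> \<psi>)"

definition rel_int :: "nat \<Rightarrow> (nat \<Rightarrow> real \<Rightarrow> real) \<Rightarrow> ((int \<Rightarrow> nat) \<times> real) set \<Rightarrow> ((int \<Rightarrow> nat) \<times> real) set" where
  "rel_int N f S = (top_of_set (Xsp N f)) interior_of S"

definition attracting_strip :: "nat \<Rightarrow> (nat \<Rightarrow> real \<Rightarrow> real) \<Rightarrow> ((int \<Rightarrow> nat) \<times> real) set \<Rightarrow> bool" where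
  "attracting_strip N f S \<longleftrightarrow> is_strip N f S \<and> Gmap N f ` S \<subseteq> rel_int N f S"

text \<open>G^{-1} defined on S: S lies in the image of Sigma_A x I under (the injective) G;
G^{-1}(S) is the preimage of S in Sigma_A x I.\<close>
definition repelling_strip :: "nat \<Rightarrow> (nat \<Rightarrow> real \<Rightarrow> real) \<Rightarrow> ((int \<Rightarrow> nat) \<times> real) set \<Rightarrow> bool" where
  "repelling_strip N f S \<longleftrightarrow> is_strip N f S \<and> S \<subseteq> Gmap N f ` Xsp N f \<and>
     {p \<in> Xsp N f. Gmap N f p \<in> S} \<subseteq> rel_int N f S"

definition max_attractor :: "nat \<Rightarrow> (nat \<Rightarrow> real \<Rightarrow> real) \<Rightarrow> ((int \<Rightarrow> nat) \<times> real) set \<Rightarrow> ((int \<Rightarrow> nat) \<times> real) set" where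
  "max_attractor N f S = (\<Inter>n. (Gmap N f ^^ n) ` S)"

definition max_repeller :: "nat \<Rightarrow> (nat \<Rightarrow> real \<Rightarrow> real) \<Rightarrow> ((int \<Rightarrow> nat) \<times> real) set \<Rightarrow> ((int \<Rightarrow> nat) \<times> real) set" where
  "max_repeller N f S = (\<Inter>n. {p \<in> Xsp N f. (Gmap N f ^^ n) p \<in> S})"

end

theory Submission
  imports Defs
begin

text \<open>\<Pi> semiconjugates G to the skew product F (Fmap), and on Sigma_A x I its fibres are the
pairs {p, \<tau> p}, where the involution \<tau> (sheet_flip) exchanges the two sheets and commutes
with G. As the fibres are finite, \<Pi> commutes with the decreasing intersections defining
maximal attractors and repellers, and the images of their stages are F^n(\<Pi> S), resp.
\<Pi>(Sigma_A x I) \<inter> F^-n(\<Pi> S); both depend on S only through \<Pi> S.\<close>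

lemma Inter_decseq_finite_nonempty:
  fixes B :: "nat \<Rightarrow> 'a set"
  assumes "decseq B" and "finite (B 0)" and "\<And>n. B n \<noteq> {}"
  shows "(\<Inter>n. B n) \<noteq> {}"
proof
  assume "(\<Inter>n. B n) = {}"
  then have "\<forall>x\<in>B 0. \<exists>n. x \<notin> B n" by blast
  then obtain k where k: "\<And>x. x \<in> B 0 \<Longrightarrow> x \<notin> B (k x)" by metis
  define m where "m = Max (k ` B 0)"
  have "x \<notin> B m" for x
  proof
    assume "x \<in> B m"
    then have "x \<in> B 0" using \<open>decseq B\<close> by (auto dest: decseqD)
    then have "k x \<le> m" using \<open>finite (B 0)\<close> by (simp add: m_def)
    then show False using \<open>x \<in> B m\<close> \<open>x \<in> B 0\<close> k \<open>decseq B\<close> by (auto dest: decseqD)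
  qed
  then show False using assms(3) by blast
qed

lemma image_Inter_decseq_finite_fibres:
  fixes A :: "nat \<Rightarrow> 'a set" and g :: "'a \<Rightarrow> 'b"
  assumes "decseq A" and "\<And>y. finite {x \<in> A 0. g x = y}"
  shows "g ` (\<Inter>n. A n) = (\<Inter>n. g ` A n)"
proof
  show "(\<Inter>n. g ` A n) \<subseteq> g ` (\<Inter>n. A n)"
  proof
    fix y assume "y \<in> (\<Inter>n. g ` A n)"
    then have "{x \<in> A n. g x = y} \<noteq> {}" for n by blast
    moreover have "decseq (\<lambda>n. {x \<in> A n. g x = y})"
      using \<open>decseq A\<close> by (auto simp: decseq_def)
    ultimately have "(\<Inter>n. {x \<in> A n. g x = y}) \<noteq> {}"
      using Inter_decseq_finite_nonempty assms(2) by blast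
    then show "y \<in> g ` (\<Inter>n. A n)" by blast
  qed
qed blast

lemma funpow_in_invariant_set:
  assumes "\<And>x. x \<in> X \<Longrightarrow> h x \<in> X" and "x \<in> X"
  shows "(h ^^ n) x \<in> X"
  by (induction n) (simp_all add: assms)

lemma funpow_semiconj:
  assumes "\<And>x. x \<in> X \<Longrightarrow> h x \<in> X" and "\<And>x. x \<in> X \<Longrightarrow> \<pi> (h x) = k (\<pi> x)" and "x \<in> X"
  shows "\<pi> ((h ^^ n) x) = (k ^^ n) (\<pi> x)"
  by (induction n) (simp_all add: assms funpow_in_invariant_set)

lemma int_shift_invariant:
  fixes P :: "int \<Rightarrow> bool"
  assumes "\<And>n. P (n + 1) \<longleftrightarrow> P n"
  shows "P n \<longleftrightarrow> P 0"
proof (induction n rule: int_induct[where k = 0])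
  case (step2 i)
  then show ?case using assms[of "i - 1"] by simp
qed (simp_all add: assms)

definition Fmap :: "(nat \<Rightarrow> real \<Rightarrow> real) \<Rightarrow> (int \<Rightarrow> nat) \<times> real \<Rightarrow> (int \<Rightarrow> nat) \<times> real" where
  "Fmap f p = (shift (fst p), f (fst p 0) (snd p))"

definition sheet_swap :: "nat \<Rightarrow> nat \<Rightarrow> nat" where
  "sheet_swap N i = (if i \<le> N then i + N else i - N)"

definition sheet_flip :: "nat \<Rightarrow> (int \<Rightarrow> nat) \<times> real \<Rightarrow> (int \<Rightarrow> nat) \<times> real" where
  "sheet_flip N p = ((\<lambda>n. sheet_swap N (fst p n)), R (snd p))"

lemma IP_subset: "IP N f \<subseteq> {1..N}" and IR_subset: "IR N f \<subseteq> {1..N}"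
  unfolding IP_def IR_def by auto

lemma IP_disjoint_IR: "IP N f \<inter> IR N f = {}"
proof -
  have False if "i \<in> IP N f" "i \<in> IR N f" for i
  proof -
    from that have "f i 0 < f i 1" "f i 1 < f i 0" unfolding IP_def IR_def by auto
    then show False by simp
  qed
  then show ?thesis by blast
qed

lemma sheet_swap_range: "i \<in> {1..2*N} \<Longrightarrow> sheet_swap N i \<in> {1..2*N}"
  and bar_sheet_swap: "i \<in> {1..2*N} \<Longrightarrow> bar N (sheet_swap N i) = bar N i"
  and sheet_swap_le_iff: "i \<in> {1..2*N} \<Longrightarrow> sheet_swap N i \<le> N \<longleftrightarrow> \<not> i \<le> N"
  unfolding sheet_swap_def bar_def by auto

lemma Aentry_sheet_swap:
  assumes "i \<in> {1..2*N}" "j \<in> {1..2*N}" "Aentry N f i j"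
  shows "Aentry N f (sheet_swap N i) (sheet_swap N j)"
  using assms IP_subset[of N f] IR_subset[of N f]
  unfolding Aentry_def sheet_swap_def by (auto split: if_splits)

text \<open>A transition changes the sheet exactly when the underlying map reverses orientation.\<close>
lemma Aentry_sheet_iff:
  assumes "Aentry N f i j"
  shows "j \<le> N \<longleftrightarrow> (i \<le> N \<longleftrightarrow> bar N i \<in> IP N f)"
  using assms IP_subset[of N f] IR_subset[of N f] IP_disjoint_IR[of N f]
  unfolding Aentry_def bar_def by (auto split: if_splits)

lemma mem_Xsp:
  "(\<omega>, x) \<in> Xsp N f \<longleftrightarrow> (\<forall>n. \<omega> n \<in> {1..2*N} \<and> Aentry N f (\<omega> n) (\<omega> (n + 1))) \<and> x \<in> {0..1}"
  unfolding Xsp_def SigmaA_def by simp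

lemma XspD:
  assumes "p \<in> Xsp N f"
  shows "fst p n \<in> {1..2*N}" and "Aentry N f (fst p n) (fst p (n + 1))" and "snd p \<in> {0..1}"
  using assms mem_Xsp[of "fst p" "snd p"] by simp_all

lemma sheet_flip_Xsp: "p \<in> Xsp N f \<Longrightarrow> sheet_flip N p \<in> Xsp N f"
  using XspD[of p N f] sheet_swap_range Aentry_sheet_swap
  by (simp add: mem_Xsp sheet_flip_def R_def)

lemma PiMap_sheet_flip: "p \<in> Xsp N f \<Longrightarrow> PiMap N (sheet_flip N p) = PiMap N p"
  using XspD(1)[of p N f] bar_sheet_swap sheet_swap_le_iff
  by (simp add: sheet_flip_def R_def PiMap_def piA_def)

lemma PiMap_inj_on_sheet:
  assumes p: "p \<in> Xsp N f" and q: "q \<in> Xsp N f" and "PiMap N p = PiMap N q"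
    and "fst p 0 \<le> N \<longleftrightarrow> fst q 0 \<le> N"
  shows "p = q"
proof -
  have bar_eq: "bar N (fst p n) = bar N (fst q n)" for n
    using \<open>PiMap N p = PiMap N q\<close> by (simp add: PiMap_def piA_def fun_eq_iff)
  have "(fst p (n + 1) \<le> N \<longleftrightarrow> fst q (n + 1) \<le> N) \<longleftrightarrow> (fst p n \<le> N \<longleftrightarrow> fst q n \<le> N)" for n
    using Aentry_sheet_iff[OF XspD(2)[OF p, of n]] Aentry_sheet_iff[OF XspD(2)[OF q, of n]] bar_eq[of n]
    by argo
  then have same_sheet: "fst p n \<le> N \<longleftrightarrow> fst q n \<le> N" for n
    using int_shift_invariant[where P = "\<lambda>n. fst p n \<le> N \<longleftrightarrow> fst q n \<le> N"] assms(4) by blast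
  have "fst p n = fst q n" for n
    using bar_eq[of n] same_sheet[of n] XspD(1)[OF p] XspD(1)[OF q]
    unfolding bar_def by (auto split: if_splits)
  moreover have "snd p = snd q"
    using \<open>PiMap N p = PiMap N q\<close> assms(4) by (auto simp: PiMap_def R_def split: if_splits)
  ultimately show "p = q" by (simp add: prod_eq_iff fun_eq_iff)
qed

lemma PiMap_eq_cases:
  assumes "p \<in> Xsp N f" "q \<in> Xsp N f" "PiMap N p = PiMap N q"
  shows "q = p \<or> q = sheet_flip N p"
proof (cases "fst p 0 \<le> N \<longleftrightarrow> fst q 0 \<le> N")
  case True
  then show ?thesis using PiMap_inj_on_sheet assms by metis
next
  case False
  then have "fst (sheet_flip N p) 0 \<le> N \<longleftrightarrow> fst q 0 \<le> N"
    using sheet_swap_le_iff[OF XspD(1)[OF assms(1)]] by (auto simp: sheet_flip_def)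
  then show ?thesis
    using PiMap_inj_on_sheet[OF sheet_flip_Xsp] PiMap_sheet_flip assms by metis
qed

lemma finite_PiMap_fibre: "finite {p \<in> Xsp N f. PiMap N p = y}"
proof (cases "{p \<in> Xsp N f. PiMap N p = y} = {}")
  case False
  then obtain p where "p \<in> Xsp N f" "PiMap N p = y" by blast
  then have "{p \<in> Xsp N f. PiMap N p = y} \<subseteq> {p, sheet_flip N p}"
    using PiMap_eq_cases by blast
  then show ?thesis by (rule finite_subset) simp
qed (metis finite.emptyI)

lemma gmap_range:
  assumes "\<forall>i\<in>{1..N}. f i ` {0..1} \<subseteq> {0..1}" and "i \<in> {1..2*N}" and "x \<in> {0..1}"
  shows "gmap N f i x \<in> {0..1}"
proof -
  have "bar N i \<in> {1..N}" using assms(2) by (auto simp: bar_def)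
  then have f_range: "f (bar N i) y \<in> {0..1}" if "y \<in> {0..1}" for y
    using assms(1) that by blast
  have R_range: "R y \<in> {0..1}" if "y \<in> {0..1}" for y
    using that by (simp add: R_def)
  show ?thesis
  proof (cases "i \<le> N")
    case True
    then show ?thesis using f_range[of x] f_range[of "R x"] R_range[of x] R_range[of "f i x"] assms(3)
      by (simp add: gmap_def bar_def)
  next
    case False
    then show ?thesis
      using f_range[of x] f_range[of "R x"] R_range[of x] R_range[of "f (i - N) (R x)"] assms(3)
      by (simp add: gmap_def bar_def)
  qed
qed

lemma Gmap_Xsp:
  assumes "\<forall>i\<in>{1..N}. f i ` {0..1} \<subseteq> {0..1}" and "p \<in> Xsp N f"
  shows "Gmap N f p \<in> Xsp N f"
proof -
  have "gmap N f (fst p 0) (snd p) \<in> {0..1}"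
    using gmap_range[OF assms(1) XspD(1,3)[OF assms(2)]] .
  moreover have "shift (fst p) n \<in> {1..2*N} \<and> Aentry N f (shift (fst p) n) (shift (fst p) (n + 1))" for n
    using XspD(1,2)[OF assms(2), of "n + 1"] by (simp add: shift_def add.assoc)
  ultimately show ?thesis using mem_Xsp[of "shift (fst p)"] by (simp add: Gmap_def)
qed

lemma gmap_sheet_swap: "i \<in> {1..2*N} \<Longrightarrow> gmap N f (sheet_swap N i) (R x) = R (gmap N f i x)"
  by (auto simp: gmap_def sheet_swap_def R_def)

lemma Gmap_sheet_flip: "p \<in> Xsp N f \<Longrightarrow> Gmap N f (sheet_flip N p) = sheet_flip N (Gmap N f p)"
  using gmap_sheet_swap[OF XspD(1)[of p N f 0]]
  by (simp add: Gmap_def sheet_flip_def shift_def)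

lemma PiMap_Gmap: "p \<in> Xsp N f \<Longrightarrow> PiMap N (Gmap N f p) = Fmap f (PiMap N p)"
  using Aentry_sheet_iff[OF XspD(2), of p N f 0] XspD(1)[of p N f 0] IP_subset[of N f] IR_subset[of N f]
  by (auto simp: PiMap_def Gmap_def Fmap_def piA_def shift_def gmap_def bar_def R_def)

lemma funpow_Gmap_Xsp:
  assumes "\<forall>i\<in>{1..N}. f i ` {0..1} \<subseteq> {0..1}" and "p \<in> Xsp N f"
  shows "(Gmap N f ^^ n) p \<in> Xsp N f"
  using funpow_in_invariant_set Gmap_Xsp[OF assms(1)] assms(2) by metis

lemma PiMap_funpow_Gmap:
  assumes "\<forall>i\<in>{1..N}. f i ` {0..1} \<subseteq> {0..1}" and "p \<in> Xsp N f"
  shows "PiMap N ((Gmap N f ^^ n) p) = (Fmap f ^^ n) (PiMap N p)"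
  by (rule funpow_semiconj[where X = "Xsp N f"]) (simp_all add: Gmap_Xsp PiMap_Gmap assms)

lemma funpow_Gmap_sheet_flip:
  assumes "\<forall>i\<in>{1..N}. f i ` {0..1} \<subseteq> {0..1}" and "p \<in> Xsp N f"
  shows "(Gmap N f ^^ n) (sheet_flip N p) = sheet_flip N ((Gmap N f ^^ n) p)"
  by (rule funpow_semiconj[where X = "Xsp N f", symmetric])
    (simp_all add: Gmap_Xsp Gmap_sheet_flip assms)

lemma PiMap_image_funpow_Gmap:
  assumes "\<forall>i\<in>{1..N}. f i ` {0..1} \<subseteq> {0..1}" and "S \<subseteq> Xsp N f"
  shows "PiMap N ` (Gmap N f ^^ n) ` S = (Fmap f ^^ n) ` PiMap N ` S"
  unfolding image_image using PiMap_funpow_Gmap[OF assms(1)] assms(2) by (intro image_cong) auto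

lemma PiMap_image_funpow_Gmap_vimage:
  assumes maps_into: "\<forall>i\<in>{1..N}. f i ` {0..1} \<subseteq> {0..1}" and S: "S \<subseteq> Xsp N f"
  shows "PiMap N ` {p \<in> Xsp N f. (Gmap N f ^^ n) p \<in> S}
    = {q \<in> PiMap N ` Xsp N f. (Fmap f ^^ n) q \<in> PiMap N ` S}"
proof
  show "PiMap N ` {p \<in> Xsp N f. (Gmap N f ^^ n) p \<in> S}
      \<subseteq> {q \<in> PiMap N ` Xsp N f. (Fmap f ^^ n) q \<in> PiMap N ` S}"
  proof (rule image_subsetI)
    fix p assume "p \<in> {p \<in> Xsp N f. (Gmap N f ^^ n) p \<in> S}"
    then show "PiMap N p \<in> {q \<in> PiMap N ` Xsp N f. (Fmap f ^^ n) q \<in> PiMap N ` S}"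
      using PiMap_funpow_Gmap[OF maps_into, of p n, symmetric] by auto
  qed
  show "{q \<in> PiMap N ` Xsp N f. (Fmap f ^^ n) q \<in> PiMap N ` S}
      \<subseteq> PiMap N ` {p \<in> Xsp N f. (Gmap N f ^^ n) p \<in> S}"
  proof
    fix q assume "q \<in> {q \<in> PiMap N ` Xsp N f. (Fmap f ^^ n) q \<in> PiMap N ` S}"
    then obtain p s where p: "p \<in> Xsp N f" "q = PiMap N p"
      and s: "s \<in> S" "(Fmap f ^^ n) q = PiMap N s" by blast
    have "PiMap N ((Gmap N f ^^ n) p) = PiMap N s"
      using PiMap_funpow_Gmap[OF maps_into p(1)] p(2) s(2) by simp
    then have "s = (Gmap N f ^^ n) p \<or> s = sheet_flip N ((Gmap N f ^^ n) p)"
      using PiMap_eq_cases funpow_Gmap_Xsp[OF maps_into p(1)] s(1) S by blast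
    then show "q \<in> PiMap N ` {p \<in> Xsp N f. (Gmap N f ^^ n) p \<in> S}"
    proof
      assume "s = (Gmap N f ^^ n) p"
      then show ?thesis using p s(1) by blast
    next
      assume "s = sheet_flip N ((Gmap N f ^^ n) p)"
      then have "(Gmap N f ^^ n) (sheet_flip N p) \<in> S"
        using funpow_Gmap_sheet_flip[OF maps_into p(1)] s(1) by simp
      moreover have "sheet_flip N p \<in> Xsp N f" "PiMap N (sheet_flip N p) = q"
        using sheet_flip_Xsp[OF p(1)] PiMap_sheet_flip[OF p(1)] p(2) by simp_all
      ultimately show ?thesis by blast
    qed
  qed
qed

lemma PiMap_max_attractor:
  assumes maps_into: "\<forall>i\<in>{1..N}. f i ` {0..1} \<subseteq> {0..1}"
    and S: "S \<subseteq> Xsp N f" and forward_invariant: "Gmap N f ` S \<subseteq> S"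
  shows "PiMap N ` max_attractor N f S = (\<Inter>n. (Fmap f ^^ n) ` PiMap N ` S)"
proof -
  have "(Gmap N f ^^ Suc n) ` S = (Gmap N f ^^ n) ` Gmap N f ` S" for n
    by (simp only: funpow_Suc_right image_comp)
  then have "(Gmap N f ^^ Suc n) ` S \<subseteq> (Gmap N f ^^ n) ` S" for n
    using image_mono[OF forward_invariant] by simp
  then have "decseq (\<lambda>n. (Gmap N f ^^ n) ` S)"
    by (rule decseq_SucI)
  moreover have "finite {p \<in> (Gmap N f ^^ 0) ` S. PiMap N p = y}" for y
    using S by (intro finite_subset[OF _ finite_PiMap_fibre[of N f y]]) auto
  ultimately have "PiMap N ` max_attractor N f S = (\<Inter>n. PiMap N ` (Gmap N f ^^ n) ` S)"
    unfolding max_attractor_def by (rule image_Inter_decseq_finite_fibres)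
  then show ?thesis
    using PiMap_image_funpow_Gmap[OF maps_into S] by simp
qed

lemma PiMap_max_repeller:
  assumes maps_into: "\<forall>i\<in>{1..N}. f i ` {0..1} \<subseteq> {0..1}"
    and S: "S \<subseteq> Xsp N f" and backward_invariant: "{p \<in> Xsp N f. Gmap N f p \<in> S} \<subseteq> S"
  shows "PiMap N ` max_repeller N f S = (\<Inter>n. {q \<in> PiMap N ` Xsp N f. (Fmap f ^^ n) q \<in> PiMap N ` S})"
proof -
  have "(Gmap N f ^^ n) p \<in> S" if "p \<in> Xsp N f" "(Gmap N f ^^ Suc n) p \<in> S" for n p
    using backward_invariant funpow_Gmap_Xsp[OF maps_into \<open>p \<in> Xsp N f\<close>, of n] that(2) by auto
  then have "{p \<in> Xsp N f. (Gmap N f ^^ Suc n) p \<in> S} \<subseteq> {p \<in> Xsp N f. (Gmap N f ^^ n) p \<in> S}" for n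
    by blast
  then have "decseq (\<lambda>n. {p \<in> Xsp N f. (Gmap N f ^^ n) p \<in> S})"
    by (rule decseq_SucI)
  moreover have "finite {p \<in> {p \<in> Xsp N f. (Gmap N f ^^ 0) p \<in> S}. PiMap N p = y}" for y
    by (intro finite_subset[OF _ finite_PiMap_fibre[of N f y]]) auto
  ultimately have "PiMap N ` max_repeller N f S
      = (\<Inter>n. PiMap N ` {p \<in> Xsp N f. (Gmap N f ^^ n) p \<in> S})"
    unfolding max_repeller_def by (rule image_Inter_decseq_finite_fibres)
  then show ?thesis
    using PiMap_image_funpow_Gmap_vimage[OF maps_into S] by simp
qed

lemma strip_subset_Xsp: "is_strip N f S \<Longrightarrow> S \<subseteq> Xsp N f"
  unfolding is_strip_def strip_set_def by auto

lemma attracting_stripD: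
  assumes "attracting_strip N f S"
  shows "S \<subseteq> Xsp N f" and "Gmap N f ` S \<subseteq> S"
proof -
  show "S \<subseteq> Xsp N f"
    using assms strip_subset_Xsp unfolding attracting_strip_def by simp
  have "Gmap N f ` S \<subseteq> rel_int N f S"
    using assms unfolding attracting_strip_def by simp
  also have "\<dots> \<subseteq> S"
    unfolding rel_int_def by (rule interior_of_subset)
  finally show "Gmap N f ` S \<subseteq> S" .
qed

lemma repelling_stripD:
  assumes "repelling_strip N f S"
  shows "S \<subseteq> Xsp N f" and "{p \<in> Xsp N f. Gmap N f p \<in> S} \<subseteq> S"
proof -
  show "S \<subseteq> Xsp N f"
    using assms strip_subset_Xsp unfolding repelling_strip_def by simp
  have "{p \<in> Xsp N f. Gmap N f p \<in> S} \<subseteq> rel_int N f S"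
    using assms unfolding repelling_strip_def by simp
  also have "\<dots> \<subseteq> S"
    unfolding rel_int_def by (rule interior_of_subset)
  finally show "{p \<in> Xsp N f. Gmap N f p \<in> S} \<subseteq> S" .
qed

theorem lemma3p27:
  fixes N :: nat and f :: "nat \<Rightarrow> real \<Rightarrow> real"
  assumes "N \<ge> 1"
    and "\<forall>i\<in>{1..N}. C1_diffeo_onto_image (f i)"
  shows "(\<forall>S S'. attracting_strip N f S \<and> attracting_strip N f S' \<and> PiMap N ` S = PiMap N ` S'
            \<longrightarrow> PiMap N ` max_attractor N f S = PiMap N ` max_attractor N f S')
       \<and> (\<forall>S S'. repelling_strip N f S \<and> repelling_strip N f S' \<and> PiMap N ` S = PiMap N ` S'
            \<longrightarrow> PiMap N ` max_repeller N f S = PiMap N ` max_repeller N f S')"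
proof -
  have maps_into: "\<forall>i\<in>{1..N}. f i ` {0..1} \<subseteq> {0..1}"
    using assms(2) unfolding C1_diffeo_onto_image_def by blast
  have "PiMap N ` max_attractor N f S = (\<Inter>n. (Fmap f ^^ n) ` PiMap N ` S)"
    if "attracting_strip N f S" for S
    using PiMap_max_attractor[OF maps_into attracting_stripD[OF that]] .
  moreover have "PiMap N ` max_repeller N f S
      = (\<Inter>n. {q \<in> PiMap N ` Xsp N f. (Fmap f ^^ n) q \<in> PiMap N ` S})"
    if "repelling_strip N f S" for S
    using PiMap_max_repeller[OF maps_into repelling_stripD[OF that]] .
  ultimately show ?thesis by simp
qed

end
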